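(* In the standing setting below, assume $c$ satisfies Loeper's property. Let $x'\in\mathbb{X}$, $y_0,y_1\in\mathbb{Y}$ with $y_0\ne y_1$, $f_i(x)=-c(x,y_i)+c(x',y_i)$ for $i=0,1$, and $S=\{x\in\mathbb{X}:f_0(x)\le f_1(x)\}$. Then $S$ is $c$-convex with respect to $y_1$, i.e. the set $\{-D_yc(x,y_1):x\in S\}$ is convex.
   Context: Standing setting: $\mathbb{X},\mathbb{Y}\subset\mathbb{R}^n$ are compact with non-empty interior; $c:\mathbb{X}\times\mathbb{Y}\to\mathbb{R}$ has continuous $D_xc$, $D_yc$, and continuous mixed second derivatives with $D^2_{xy}c=(D^2_{yx}c)^T$; for each $x$ the map $y\mapsto -D_xc(x,y)$ is injective on $\mathbb{Y}$ and for each $y$ the map $x\mapsto -D_yc(x,y)$ is injective on $\mathbb{X}$; $D^2_{xy}c(x,y)$ is invertible everywhere; for every $y$ the set $[\mathbb{X}]_y=\{-D_yc(x,y):x\in\mathbb{X}\}$ is convex and for every $x$ the set $\{-D_xc(x,y):y\in\mathbb{Y}\}$ is convex. $\exp^c_y:[\mathbb{X}]_y\to\mathbb{X}$ is the inverse of $x\mapsto -D_yc(x,y)$; for $x_0,x_1\in\mathbb{X}$, $y\in\mathbb{Y}$, $p_i=-D_yc(x_i,y)$, the $c$-segment with respect to $y$ from $x_0$ to $x_1$ is $\{x_t=\exp^c_y(tp_1+(1-t)p_0):t\in[0,1]\}$. Loeper's property: for all $x_0,x_1\in\mathbb{X}$, $y_0,y\in\mathbb{Y}$ and every $x_t$ on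 the $c$-segment with respect to $y_0$ from $x_0$ to $x_1$, $-c(x_t,y)+c(x_t,y_0)\le\max\{-c(x_i,y)+c(x_i,y_0):i=0,1\}$. *)

theory Defs
  imports "HOL-Analysis.Analysis"
begin

text \<open>Dx x y and Dy x y are the gradients D_x c and D_y c (derivatives taken
within X resp. Y, since X, Y are compact). Dxy x y is the matrix of the mixed
second derivative D_{xy} c (derivative of Dx in y), Dyx x y that of D_{yx} c
(derivative of Dy in x).\<close>

definition standing_setting ::
  "(real^'n) set \<Rightarrow> (real^'n) set \<Rightarrow> (real^'n \<Rightarrow> real^'n \<Rightarrow> real)
   \<Rightarrow> (real^'n \<Rightarrow> real^'n \<Rightarrow> real^'n) \<Rightarrow> (real^'n \<Rightarrow> real^'n \<Rightarrow> real^'n)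
   \<Rightarrow> (real^'n \<Rightarrow> real^'n \<Rightarrow> real^'n^'n) \<Rightarrow> (real^'n \<Rightarrow> real^'n \<Rightarrow> real^'n^'n) \<Rightarrow> bool"
where
  "standing_setting X Y c Dx Dy Dxy Dyx \<longleftrightarrow>
     compact X \<and> interior X \<noteq> {} \<and> compact Y \<and> interior Y \<noteq> {} \<and>
     (\<forall>x\<in>X. \<forall>y\<in>Y. ((\<lambda>x'. c x' y) has_derivative (\<lambda>h. Dx x y \<bullet> h)) (at x within X)) \<and>
     (\<forall>x\<in>X. \<forall>y\<in>Y. ((\<lambda>y'. c x y') has_derivative (\<lambda>k. Dy x y \<bullet> k)) (at y within Y)) \<and>
     continuous_on (X \<times> Y) (\<lambda>(x, y). Dx x y) \<and>
     continuous_on (X \<times> Y) (\<lambda>(x, y). Dy x y) \<and>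
     (\<forall>x\<in>X. \<forall>y\<in>Y. ((\<lambda>y'. Dx x y') has_derivative (\<lambda>k. Dxy x y *v k)) (at y within Y)) \<and>
     (\<forall>x\<in>X. \<forall>y\<in>Y. ((\<lambda>x'. Dy x' y) has_derivative (\<lambda>h. Dyx x y *v h)) (at x within X)) \<and>
     continuous_on (X \<times> Y) (\<lambda>(x, y). Dxy x y) \<and>
     continuous_on (X \<times> Y) (\<lambda>(x, y). Dyx x y) \<and>
     (\<forall>x\<in>X. \<forall>y\<in>Y. Dxy x y = transpose (Dyx x y)) \<and>
     (\<forall>x\<in>X. inj_on (\<lambda>y. - Dx x y) Y) \<and>
     (\<forall>y\<in>Y. inj_on (\<lambda>x. - Dy x y) X) \<and>
     (\<forall>x\<in>X. \<forall>y\<in>Y. invertible (Dxy x y)) \<and>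
     (\<forall>y\<in>Y. convex ((\<lambda>x. - Dy x y) ` X)) \<and>
     (\<forall>x\<in>X. convex ((\<lambda>y. - Dx x y) ` Y))"

definition exp_c :: "(real^'n) set \<Rightarrow> (real^'n \<Rightarrow> real^'n \<Rightarrow> real^'n) \<Rightarrow> real^'n \<Rightarrow> real^'n \<Rightarrow> real^'n"
  where "exp_c X Dy y p = inv_into X (\<lambda>x. - Dy x y) p"

definition c_segment :: "(real^'n) set \<Rightarrow> (real^'n \<Rightarrow> real^'n \<Rightarrow> real^'n) \<Rightarrow> real^'n \<Rightarrow> real^'n \<Rightarrow> real^'n \<Rightarrow> (real^'n) set"
  where "c_segment X Dy y x0 x1 =
    (\<lambda>t. exp_c X Dy y (t *\<^sub>R (- Dy x1 y) + (1 - t) *\<^sub>R (- Dy x0 y))) ` {0..1}"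

definition loeper_property :: "(real^'n) set \<Rightarrow> (real^'n) set \<Rightarrow> (real^'n \<Rightarrow> real^'n \<Rightarrow> real)
   \<Rightarrow> (real^'n \<Rightarrow> real^'n \<Rightarrow> real^'n) \<Rightarrow> bool"
  where "loeper_property X Y c Dy \<longleftrightarrow>
    (\<forall>x0\<in>X. \<forall>x1\<in>X. \<forall>y0\<in>Y. \<forall>y\<in>Y. \<forall>xt\<in>c_segment X Dy y0 x0 x1.
       - c xt y + c xt y0 \<le> max (- c x0 y + c x0 y0) (- c x1 y + c x1 y0))"

end

theory Submission
  imports Defs
begin

(* Loeper's property, applied to c-segments with respect to y1, says that
   g(x) = -c(x,y0) + c(x,y1) never exceeds the larger of its values at the endpoints
   of such a segment. Hence every sublevel set of g is c-convex with respect to y1,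
   and S is the sublevel set of g at level c(x',y1) - c(x',y0). *)

lemma exp_c_inverse:
  assumes "p \<in> (\<lambda>x. - Dy x y) ` X"
  shows "exp_c X Dy y p \<in> X" and "- Dy (exp_c X Dy y p) y = p"
  using assms unfolding exp_c_def by (auto intro: inv_into_into f_inv_into_f)

lemma c_segment_point_with_coordinate:
  assumes "convex ((\<lambda>x. - Dy x y) ` X)" and "x0 \<in> X" and "x1 \<in> X" and "t \<in> {0..1}"
  obtains xt where "xt \<in> c_segment X Dy y x0 x1" and "xt \<in> X"
    and "- Dy xt y = (1 - t) *\<^sub>R (- Dy x0 y) + t *\<^sub>R (- Dy x1 y)"
proof -
  define p where "p = (1 - t) *\<^sub>R (- Dy x0 y) + t *\<^sub>R (- Dy x1 y)"
  have "p \<in> (\<lambda>x. - Dy x y) ` X"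
    unfolding p_def using assms by (intro convexD_alt) auto
  moreover have "exp_c X Dy y p \<in> c_segment X Dy y x0 x1"
    using assms(4) unfolding c_segment_def p_def by (auto simp: add.commute)
  ultimately show ?thesis
    using that exp_c_inverse[of p Dy y X] unfolding p_def by blast
qed

lemma loeper_sublevel_set_c_convex:
  assumes "loeper_property X Y c Dy" and "convex ((\<lambda>x. - Dy x y1) ` X)"
    and "y0 \<in> Y" and "y1 \<in> Y"
  shows "convex ((\<lambda>x. - Dy x y1) ` {x \<in> X. - c x y0 + c x y1 \<le> a})"
  unfolding convex_alt
proof (intro ballI allI impI)
  fix p q and t :: real
  assume "p \<in> (\<lambda>x. - Dy x y1) ` {x \<in> X. - c x y0 + c x y1 \<le> a}"
    and "q \<in> (\<lambda>x. - Dy x y1) ` {x \<in> X. - c x y0 + c x y1 \<le> a}"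
    and t: "0 \<le> t \<and> t \<le> 1"
  then obtain x0 x1 where x0: "x0 \<in> X" "- c x0 y0 + c x0 y1 \<le> a" "p = - Dy x0 y1"
    and x1: "x1 \<in> X" "- c x1 y0 + c x1 y1 \<le> a" "q = - Dy x1 y1"
    by blast
  obtain xt where seg: "xt \<in> c_segment X Dy y1 x0 x1" and "xt \<in> X"
    and "- Dy xt y1 = (1 - t) *\<^sub>R (- Dy x0 y1) + t *\<^sub>R (- Dy x1 y1)"
    by (rule c_segment_point_with_coordinate[where Dy = Dy and y = y1, OF assms(2) x0(1) x1(1)])
      (use t in auto)
  then have coord: "- Dy xt y1 = (1 - t) *\<^sub>R p + t *\<^sub>R q"
    using x0(3) x1(3) by simp
  have "- c xt y0 + c xt y1 \<le> max (- c x0 y0 + c x0 y1) (- c x1 y0 + c x1 y1)"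
    using assms(1,3,4) x0(1) x1(1) seg unfolding loeper_property_def by blast
  with x0(2) x1(2) have "- c xt y0 + c xt y1 \<le> a"
    by linarith
  with \<open>xt \<in> X\<close> coord
  show "(1 - t) *\<^sub>R p + t *\<^sub>R q \<in> (\<lambda>x. - Dy x y1) ` {x \<in> X. - c x y0 + c x y1 \<le> a}"
    by (metis (mono_tags, lifting) image_eqI mem_Collect_eq)
qed

theorem lemma2p24:
  fixes X Y :: "(real^'n) set" and c :: "real^'n \<Rightarrow> real^'n \<Rightarrow> real"
    and Dx Dy :: "real^'n \<Rightarrow> real^'n \<Rightarrow> real^'n"
    and Dxy Dyx :: "real^'n \<Rightarrow> real^'n \<Rightarrow> real^'n^'n"
    and x' y0 y1 :: "real^'n"
  assumes "standing_setting X Y c Dx Dy Dxy Dyx"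
    and "loeper_property X Y c Dy"
    and "x' \<in> X" and "y0 \<in> Y" and "y1 \<in> Y" and "y0 \<noteq> y1"
  shows "convex ((\<lambda>x. - Dy x y1) `
           {x \<in> X. - c x y0 + c x' y0 \<le> - c x y1 + c x' y1})"
proof -
  have "convex ((\<lambda>x. - Dy x y1) ` X)"
    using assms(1,5) unfolding standing_setting_def by blast
  then have "convex ((\<lambda>x. - Dy x y1) ` {x \<in> X. - c x y0 + c x y1 \<le> c x' y1 - c x' y0})"
    using loeper_sublevel_set_c_convex assms(2,4,5) by blast
  moreover have "{x \<in> X. - c x y0 + c x y1 \<le> c x' y1 - c x' y0}
      = {x \<in> X. - c x y0 + c x' y0 \<le> - c x y1 + c x' y1}"
    by auto
  ultimately show ?thesis
    by simp
qed

end
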